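(* Let $p\ge1$ be an integer, let $\lambda$ be a random variable with the beta distribution $\mathrm{Beta}(1,p)$, i.e. with density $p(1-t)^{p-1}$ on $[0,1]$, and let $Z$ be a random variable whose conditional distribution given $\lambda=t$ is Poisson with mean $t$ (so $Z$ has the beta-Poisson distribution). Then for every integer $n\ge0$ and every real $x$, $$\mathcal{B}_{n,p}(x)=\mathbb{E}\big[(x+Z)^n\big].$$
   Context: For an integer $p\ge0$, the $p$-Bell numbers $\mathcal{B}_{n,p}$ are defined by $\sum_{n\ge0}\mathcal{B}_{n,p}\frac{z^n}{n!}=\sum_{n\ge0}\binom{n+p}{p}^{-1}\frac{(e^z-1)^n}{n!}$, and the $p$-Bell polynomials by $\mathcal{B}_{n,p}(x)=\sum_{k=0}^n\binom nk\mathcal{B}_{k,p}x^{n-k}$. *)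

theory Defs
  imports "HOL-Probability.Probability" "HOL-Computational_Algebra.Formal_Power_Series"
begin

definition pBell_egf :: "nat \<Rightarrow> real fps" where
  "pBell_egf p = (\<Sum>k. fps_const (1 / (real ((k + p) choose p) * fact k)) * (fps_exp 1 - 1) ^ k)"

definition pBell :: "nat \<Rightarrow> nat \<Rightarrow> real" where
  "pBell n p = fact n * fps_nth (pBell_egf p) n"

definition pBell_poly :: "nat \<Rightarrow> nat \<Rightarrow> real \<Rightarrow> real" where
  "pBell_poly n p x = (\<Sum>k=0..n. real (n choose k) * pBell k p * x ^ (n - k))"

end

theory Submission
  imports Defs
begin

text \<open>Expanding (e^z - 1)^k by the binomial theorem shows that its EGF coefficients are
  k! S(n,k), with S(n,k) the Stirling numbers of the second kind; hence
  B_{n,p} = sum_k S(n,k) / C(k+p,p). Conditionally on lambda = t, the Poisson moment E[Z^n] is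
  the Touchard polynomial sum_k S(n,k) t^k (a Cauchy product with the series of e^{-t}), and the
  Beta(1,p) moments are E[lambda^k] = 1 / C(k+p,p). Hence E[Z^n] = B_{n,p}, and the binomial
  theorem gives the identity for E[(x+Z)^n].\<close>

text \<open>Stirling numbers of the second kind in their explicit form.\<close>
definition stirling2 :: "nat \<Rightarrow> nat \<Rightarrow> real" where
  "stirling2 n k = (\<Sum>i\<le>k. real i ^ n * (-1) ^ (k - i) / (fact i * fact (k - i)))"

lemma fps_nth_exp_minus_one_power:
  "fps_nth ((fps_exp (1::real) - 1) ^ k) n = fact k / fact n * stirling2 n k"
proof -
  have "(fps_exp (1::real) - 1) ^ k = (\<Sum>i\<le>k. of_nat (k choose i) * fps_exp 1 ^ i * (-1) ^ (k - i))"
    using binomial_ring[of "fps_exp (1::real)" "-1" k] by simp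
  also have "\<dots> = (\<Sum>i\<le>k. fps_const (real (k choose i) * (-1) ^ (k - i)) * fps_exp (real i))"
    by (intro sum.cong refl)
       (simp add: fps_exp_power_mult fps_of_nat flip: fps_const_neg fps_const_power fps_const_mult)
  finally have "fps_nth ((fps_exp (1::real) - 1) ^ k) n
      = (\<Sum>i\<le>k. real (k choose i) * (-1) ^ (k - i) * (real i ^ n / fact n))"
    by (simp add: fps_sum_nth)
  also have "\<dots> = fact k / fact n * stirling2 n k"
    unfolding stirling2_def sum_distrib_left
    by (intro sum.cong refl) (simp add: binomial_fact field_simps)
  finally show ?thesis .
qed

lemma stirling2_eq_0: "n < k \<Longrightarrow> stirling2 n k = 0"
  using startsby_zero_power_prefix[of "fps_exp (1::real) - 1" k]
  by (simp add: fps_nth_exp_minus_one_power)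

lemma sums_fps_if_nth_vanishes_below:
  fixes f :: "nat \<Rightarrow> 'a::ab_group_add fps"
  assumes "\<And>k n. n < k \<Longrightarrow> fps_nth (f k) n = 0"
  shows "f sums Abs_fps (\<lambda>n. \<Sum>k\<le>n. fps_nth (f k) n)"
  unfolding sums_def
proof (rule tendsto_fpsI)
  fix n
  have "fps_nth (\<Sum>k<N. f k) n = (\<Sum>k\<le>n. fps_nth (f k) n)" if "n < N" for N
    using that assms by (simp add: fps_sum_nth, intro sum.mono_neutral_right) auto
  then show "\<forall>\<^sub>F N in sequentially.
      fps_nth (\<Sum>k<N. f k) n = fps_nth (Abs_fps (\<lambda>n. \<Sum>k\<le>n. fps_nth (f k) n)) n"
    by (auto simp: eventually_sequentially intro: exI[of _ "Suc n"])
qed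

lemma pBell_eq_sum_stirling2:
  "pBell n p = (\<Sum>k\<le>n. stirling2 n k / real ((k + p) choose p))"
proof -
  define f where
    "f = (\<lambda>k. fps_const (1 / (real ((k + p) choose p) * fact k)) * (fps_exp (1::real) - 1) ^ k)"
  have nth_f: "fps_nth (f k) n = stirling2 n k / real ((k + p) choose p) / fact n" for k n
    by (simp add: f_def fps_nth_exp_minus_one_power)
  have "f sums Abs_fps (\<lambda>n. \<Sum>k\<le>n. fps_nth (f k) n)"
    by (rule sums_fps_if_nth_vanishes_below) (simp add: nth_f stirling2_eq_0)
  then have "pBell_egf p = Abs_fps (\<lambda>n. \<Sum>k\<le>n. fps_nth (f k) n)"
    unfolding pBell_egf_def f_def[symmetric] by (simp add: sums_iff)
  then show ?thesis
    by (simp add: pBell_def nth_f sum_distrib_left)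
qed

lemma power_div_fact_le_exp:
  fixes x :: real
  assumes "0 \<le> x"
  shows "x ^ n / fact n \<le> exp x"
proof -
  have "(\<lambda>k. x ^ k / fact k) sums exp x"
    using exp_converges[of x] by (simp add: divide_inverse mult.commute scaleR_conv_of_real)
  then show ?thesis
    using sum_le_suminf[of "\<lambda>k. x ^ k / fact k" "{n}"] assms by (simp add: sums_iff)
qed

lemma summable_power_mult_exp_series:
  fixes r :: real
  assumes "0 \<le> r"
  shows "summable (\<lambda>m. real m ^ n * r ^ m / fact m)"
proof (rule summable_comparison_test')
  show "summable (\<lambda>m. fact n * ((exp 1 * r) ^ m / fact m))"
    using exp_converges[of "exp 1 * r"]
    by (intro summable_mult) (simp add: sums_iff divide_inverse mult.commute scaleR_conv_of_real)
next
  fix m :: nat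
  have "real m ^ n \<le> fact n * exp 1 ^ m"
    using power_div_fact_le_exp[of "real m" n] by (simp add: field_simps flip: exp_of_nat_mult)
  then have "real m ^ n * r ^ m \<le> fact n * exp 1 ^ m * r ^ m"
    using assms by (intro mult_right_mono) auto
  then show "norm (real m ^ n * r ^ m / fact m) \<le> fact n * ((exp 1 * r) ^ m / fact m)"
    using assms by (simp add: power_mult_distrib divide_right_mono mult_ac)
qed

definition touchard :: "nat \<Rightarrow> real \<Rightarrow> real" where
  "touchard n t = (\<Sum>k\<le>n. stirling2 n k * t ^ k)"

lemma sums_power_mult_exp_series:
  "(\<lambda>m. real m ^ n * t ^ m / fact m) sums (exp t * touchard n t)"
proof -
  define a where "a = (\<lambda>m. real m ^ n * t ^ m / fact m)"
  define b where "b = (\<lambda>m. (- t) ^ m / fact m)"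
  have b_sums: "b sums exp (- t)"
    using exp_converges[of "-t"] by (simp add: b_def divide_inverse mult.commute scaleR_conv_of_real)
  have a_abs: "summable (\<lambda>m. norm (a m))"
    using summable_power_mult_exp_series[of "\<bar>t\<bar>" n] by (simp add: a_def abs_mult power_abs)
  have b_abs: "summable (\<lambda>m. norm (b m))"
    using exp_converges[of "\<bar>t\<bar>"]
    by (simp add: b_def sums_iff divide_inverse mult.commute scaleR_conv_of_real abs_mult power_abs)
  have convolution: "(\<Sum>i\<le>k. a i * b (k - i)) = stirling2 n k * t ^ k" for k
  proof -
    have "a i * b (k - i) = real i ^ n * (-1) ^ (k - i) / (fact i * fact (k - i)) * t ^ k"
      if "i \<le> k" for i
    proof -
      have "t ^ i * t ^ (k - i) = t ^ k" using that by (simp flip: power_add)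
      then show ?thesis unfolding a_def b_def by (simp add: power_minus[of t] field_simps)
    qed
    then show ?thesis by (simp add: stirling2_def sum_distrib_right)
  qed
  have "suminf a * exp (- t) = (\<Sum>k. \<Sum>i\<le>k. a i * b (k - i))"
    using Cauchy_product[OF a_abs b_abs] b_sums by (simp add: sums_iff)
  also have "\<dots> = (\<Sum>k. stirling2 n k * t ^ k)"
    by (simp add: convolution)
  also have "\<dots> = touchard n t"
    unfolding touchard_def by (rule suminf_finite) (auto simp: stirling2_eq_0)
  finally have "suminf a * exp (- t) = touchard n t" .
  then have "suminf a = exp t * touchard n t"
    by (metis exp_minus_inverse mult.assoc mult.commute mult_1)
  moreover have "summable a" using a_abs summable_norm_cancel by blast
  ultimately show ?thesis unfolding a_def by (simp add: sums_iff)
qed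

lemma sums_poisson_moment:
  "(\<lambda>m. real m ^ n * (t ^ m / fact m * exp (- t))) sums touchard n t"
proof -
  have "(\<lambda>m. real m ^ n * t ^ m / fact m * exp (- t)) sums (exp t * touchard n t * exp (- t))"
    by (rule sums_mult2[OF sums_power_mult_exp_series])
  also have "exp t * touchard n t * exp (- t) = touchard n t * (exp t * exp (- t))"
    by (simp only: ac_simps)
  also have "\<dots> = touchard n t"
    by (simp add: exp_minus_inverse)
  finally show ?thesis by (simp add: mult.assoc)
qed

lemma touchard_nonneg: "0 \<le> t \<Longrightarrow> 0 \<le> touchard n t"
  by (rule sums_le[OF _ sums_zero sums_poisson_moment]) simp

lemma has_integral_Beta_nat:
  "((\<lambda>t::real. t ^ a * (1 - t) ^ b) has_integral (fact a * fact b / fact (a + b + 1))) {0..1}"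
proof -
  have "((\<lambda>t. t powr (real a + 1 - 1) * (1 - t) powr (real b + 1 - 1))
          has_integral Beta (real a + 1) (real b + 1)) {0<..<1}"
    using has_integral_Beta_real[of "real a + 1" "real b + 1"] by (simp add: has_integral_Icc_iff_Ioo)
  then have "((\<lambda>t. t ^ a * (1 - t) ^ b) has_integral Beta (real a + 1) (real b + 1)) {0<..<1}"
    by (rule has_integral_eq[rotated]) (simp add: powr_realpow)
  moreover have "Beta (real a + 1) (real b + 1) = fact a * fact b / fact (a + b + 1)"
    using Gamma_fact[of a, where 'a=real] Gamma_fact[of b, where 'a=real]
      Gamma_fact[of "a + b + 1", where 'a=real]
    by (simp add: Beta_def add_ac)
  ultimately show ?thesis by (simp add: has_integral_Icc_iff_Ioo)
qed

lemma has_integral_beta_moment: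
  assumes "1 \<le> p"
  shows "((\<lambda>t. real p * (1 - t) ^ (p - 1) * t ^ k) has_integral (1 / real ((k + p) choose p))) {0..1}"
proof -
  have "real p * (fact k * fact (p - 1) / fact (k + (p - 1) + 1)) = 1 / real ((k + p) choose p)"
    using assms binomial_fact[of p "k + p", where 'a=real] fact_reduce[of p, where 'a=real]
    by (simp add: field_simps)
  then show ?thesis
    using has_integral_mult_right[OF has_integral_Beta_nat[of k "p - 1"], of "real p"]
    by (simp add: mult_ac)
qed

lemma has_integral_beta_touchard:
  assumes "1 \<le> p"
  shows "((\<lambda>t. real p * (1 - t) ^ (p - 1) * touchard n t) has_integral pBell n p) {0..1}"
proof -
  have "((\<lambda>t. \<Sum>k\<le>n. stirling2 n k * (real p * (1 - t) ^ (p - 1) * t ^ k)) has_integral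
          (\<Sum>k\<le>n. stirling2 n k * (1 / real ((k + p) choose p)))) {0..1}"
    by (intro has_integral_sum has_integral_mult_right has_integral_beta_moment assms) auto
  then show ?thesis
    by (simp add: pBell_eq_sum_stirling2 touchard_def sum_distrib_left mult_ac)
qed

lemma pBell_nonneg:
  assumes "1 \<le> p"
  shows "0 \<le> pBell n p"
  by (rule has_integral_nonneg[OF has_integral_beta_touchard[OF assms]]) (simp add: touchard_nonneg)

lemma nn_integral_poisson_moment:
  assumes "0 \<le> t"
  shows "(\<integral>\<^sup>+k. ennreal (t ^ k / fact k * exp (- t)) * ennreal (real k ^ n) \<partial>count_space UNIV)
    = ennreal (touchard n t)"
proof -
  have "(\<integral>\<^sup>+k. ennreal (t ^ k / fact k * exp (- t)) * ennreal (real k ^ n) \<partial>count_space UNIV)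
      = (\<Sum>k. ennreal (t ^ k / fact k * exp (- t) * real k ^ n))"
    unfolding nn_integral_count_space_nat by (simp only: ennreal_mult'' zero_le_power of_nat_0_le_iff)
  also have "\<dots> = ennreal (touchard n t)"
    using sums_poisson_moment[of n t] assms
    by (subst suminf_ennreal2) (auto simp: sums_iff mult.commute)
  finally show ?thesis .
qed

lemma nn_integral_pair_density_snd:
  fixes L :: "'a \<Rightarrow> real" and Z :: "'a \<Rightarrow> nat" and f :: "real \<times> nat \<Rightarrow> ennreal"
  assumes "L \<in> M \<rightarrow>\<^sub>M borel" "Z \<in> M \<rightarrow>\<^sub>M count_space UNIV"
    and "f \<in> borel_measurable (lborel \<Otimes>\<^sub>M count_space UNIV)"
    and "distr M (lborel \<Otimes>\<^sub>M count_space UNIV) (\<lambda>\<omega>. (L \<omega>, Z \<omega>)) =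
      density (lborel \<Otimes>\<^sub>M count_space UNIV) f"
  shows "(\<integral>\<^sup>+\<omega>. g (Z \<omega>) \<partial>M) = (\<integral>\<^sup>+t. \<integral>\<^sup>+k. f (t, k) * g k \<partial>count_space UNIV \<partial>lborel)"
proof -
  interpret count: sigma_finite_measure "count_space (UNIV :: nat set)"
    by (rule sigma_finite_measure_count_space_countable) simp
  have g_meas: "(\<lambda>y. g (snd y)) \<in> borel_measurable (lborel \<Otimes>\<^sub>M count_space UNIV)"
    by measurable
  have "(\<integral>\<^sup>+\<omega>. g (Z \<omega>) \<partial>M)
      = (\<integral>\<^sup>+y. g (snd y) \<partial>distr M (lborel \<Otimes>\<^sub>M count_space UNIV) (\<lambda>\<omega>. (L \<omega>, Z \<omega>)))"
    using assms(1,2) g_meas by (subst nn_integral_distr) auto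
  also have "\<dots> = (\<integral>\<^sup>+y. f y * g (snd y) \<partial>(lborel \<Otimes>\<^sub>M count_space UNIV))"
    unfolding assms(4) using assms(3) g_meas by (rule nn_integral_density)
  also have "\<dots> = (\<integral>\<^sup>+t. \<integral>\<^sup>+k. f (t, k) * g k \<partial>count_space UNIV \<partial>lborel)"
    using assms(3) g_meas by (subst count.nn_integral_fst[symmetric]) auto
  finally show ?thesis .
qed

lemma has_bochner_integral_beta_poisson_moment:
  fixes L :: "'a \<Rightarrow> real" and Z :: "'a \<Rightarrow> nat"
  assumes p: "1 \<le> p"
    and L: "L \<in> M \<rightarrow>\<^sub>M borel"
    and Z: "Z \<in> M \<rightarrow>\<^sub>M count_space UNIV"
    and distr: "distr M (lborel \<Otimes>\<^sub>M count_space UNIV) (\<lambda>\<omega>. (L \<omega>, Z \<omega>)) =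
         density (lborel \<Otimes>\<^sub>M count_space UNIV)
           (\<lambda>(t, k). ennreal (indicator {0..1} t * real p * (1 - t) ^ (p - 1)
                              * (t ^ k / fact k * exp (- t))))"
  shows "has_bochner_integral M (\<lambda>\<omega>. real (Z \<omega>) ^ n) (pBell n p)"
proof -
  define beta where "beta t = indicator {0..1} t * real p * (1 - t) ^ (p - 1)" for t :: real
  define f :: "real \<times> nat \<Rightarrow> ennreal"
    where "f = (\<lambda>(t, k). ennreal (beta t * (t ^ k / fact k * exp (- t))))"
  have f_meas: "f \<in> borel_measurable (lborel \<Otimes>\<^sub>M count_space UNIV)"
  proof -
    \<comment> \<open>\<open>measurable\<close> cannot handle the exponent \<open>k\<close>; split over its countably many values\<close>
    have "(\<lambda>y. (\<lambda>k (t, _). ennreal (beta t * (t ^ k / fact k * exp (- t)))) (snd y) y)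
            \<in> borel_measurable (lborel \<Otimes>\<^sub>M count_space UNIV)"
      by (rule measurable_compose_countable[where g = snd]) (auto simp: beta_def)
    then show ?thesis by (simp add: f_def case_prod_beta)
  qed
  have distr_f: "distr M (lborel \<Otimes>\<^sub>M count_space UNIV) (\<lambda>\<omega>. (L \<omega>, Z \<omega>)) =
      density (lborel \<Otimes>\<^sub>M count_space UNIV) f"
    using distr by (simp only: f_def beta_def)
  have beta_nonneg: "0 \<le> beta t" for t
    by (simp add: beta_def indicator_def)
  have f_eq: "f (t, k) = ennreal (beta t) * ennreal (t ^ k / fact k * exp (- t))" for t k
    unfolding f_def by (simp only: case_prod_conv ennreal_mult'[OF beta_nonneg])
  have inner: "(\<integral>\<^sup>+k. f (t, k) * ennreal (real k ^ n) \<partial>count_space UNIV)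
      = ennreal (real p * (1 - t) ^ (p - 1) * touchard n t) * indicator {0..1} t" for t
  proof (cases "t \<in> {0..1}")
    case True
    then have "(\<integral>\<^sup>+k. f (t, k) * ennreal (real k ^ n) \<partial>count_space UNIV)
        = ennreal (beta t) * ennreal (touchard n t)"
      using nn_integral_poisson_moment[of t n] by (simp add: f_eq mult.assoc nn_integral_cmult)
    then show ?thesis
      using True by (simp add: beta_def ennreal_mult')
  qed (simp add: f_eq beta_def)
  have "(\<integral>\<^sup>+\<omega>. ennreal (real (Z \<omega>) ^ n) \<partial>M)
      = (\<integral>\<^sup>+t. ennreal (real p * (1 - t) ^ (p - 1) * touchard n t) * indicator {0..1} t \<partial>lborel)"
    using nn_integral_pair_density_snd[OF L Z f_meas distr_f, where g = "\<lambda>k. ennreal (real k ^ n)"]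
    by (simp add: inner)
  also have "\<dots> = ennreal (pBell n p)"
    using p by (intro nn_integral_has_integral_lebesgue' has_integral_beta_touchard) (simp add: touchard_nonneg)
  finally show ?thesis
    using Z pBell_nonneg[OF p] by (intro has_bochner_integral_nn_integral) auto
qed

lemma has_bochner_integral_binomial_power:
  fixes Y :: "'a \<Rightarrow> real"
  assumes "\<And>k. k \<le> n \<Longrightarrow> has_bochner_integral M (\<lambda>\<omega>. Y \<omega> ^ k) (m k)"
  shows "has_bochner_integral M (\<lambda>\<omega>. (x + Y \<omega>) ^ n) (\<Sum>k\<le>n. real (n choose k) * m k * x ^ (n - k))"
proof -
  have "(x + Y \<omega>) ^ n = (\<Sum>k\<le>n. real (n choose k) * Y \<omega> ^ k * x ^ (n - k))" for \<omega>
    using binomial_ring[of "Y \<omega>" x n] by (simp add: add.commute)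
  moreover have "has_bochner_integral M (\<lambda>\<omega>. \<Sum>k\<le>n. real (n choose k) * Y \<omega> ^ k * x ^ (n - k))
      (\<Sum>k\<le>n. real (n choose k) * m k * x ^ (n - k))"
    using assms
    by (intro has_bochner_integral_sum has_bochner_integral_mult_left has_bochner_integral_mult_right)
      auto
  ultimately show ?thesis by simp
qed

theorem mainTheorem16:
  fixes M :: "'a measure" and L :: "'a \<Rightarrow> real" and Z :: "'a \<Rightarrow> nat"
    and p n :: nat and x :: real
  assumes "prob_space M"
    and "p \<ge> 1"
    and "L \<in> M \<rightarrow>\<^sub>M borel"
    and "Z \<in> M \<rightarrow>\<^sub>M count_space UNIV"
    and "distr M (lborel \<Otimes>\<^sub>M count_space UNIV) (\<lambda>\<omega>. (L \<omega>, Z \<omega>)) =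
         density (lborel \<Otimes>\<^sub>M count_space UNIV)
           (\<lambda>(t, k). ennreal (indicator {0..1} t * real p * (1 - t) ^ (p - 1)
                              * (t ^ k / fact k * exp (- t))))"
  shows "pBell_poly n p x = prob_space.expectation M (\<lambda>\<omega>. (x + real (Z \<omega>)) ^ n)"
proof -
  have "has_bochner_integral M (\<lambda>\<omega>. (x + real (Z \<omega>)) ^ n) (pBell_poly n p x)"
    unfolding pBell_poly_def atLeast0AtMost
    by (intro has_bochner_integral_binomial_power has_bochner_integral_beta_poisson_moment[OF assms(2-5)])
  then show ?thesis
    by (simp add: has_bochner_integral_integral_eq)
qed

end
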